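(* Let $n\ge 3$, $q=\frac{2n}{n-2}$, $\kappa=\frac{n-1}{n}$. Identify $S^1$ with $[-\pi,\pi]$ with endpoints identified, and let $\lambda=-1$ on $(-\pi,0)$, $\lambda=1$ on $(0,\pi)$. For $t\in\mathbb{R}$ let $\tau_t=t+\lambda$. Let $N$ be a smooth positive function on $S^1$, let $\gamma_N=-\frac{\int_{S^1}\lambda N}{\int_{S^1}N}$, and let $\eta,\mu\in\mathbb{R}$. Consider the system $$-2\kappa q\,\phi''-2\eta^2\phi^{-q-1}-\kappa\Big(\mu+\tfrac{1}{2N}w'\Big)^2\phi^{-q-1}+\kappa\tau_t^2\phi^{q-1}=0,\qquad \Big(\tfrac{1}{2N}w'\Big)'-\phi^q\tau_t'=0$$ on $S^1$. Suppose $t=\gamma_N$. If $\mu=\eta=0$, there exists a one-parameter family of solutions. If $\mu=0$ and $\eta\neq0$, there does not exist a solution.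
   Context: Here $\tau_t'=2(\delta_0-\delta_\pi)$ is the distributional derivative ($\delta_x$ the Dirac mass at $x$), and the second equation is understood in the sense of distributions. A solution is a pair $(\phi,w)\in W^{2,p}_+(S^1)\times W^{1,p}(S^1)$ for some $p>1$, where the subscript $+$ denotes positive functions. Solutions differing only by adding a constant to $w$ are regarded as the same. *)

theory Defs
  imports "HOL-Analysis.Analysis"
begin

text \<open>S^1 = [-pi,pi] with endpoints identified: functions on S^1 are 2pi-periodic
  functions on the real line.\<close>
definition per2pi :: "(real \<Rightarrow> real) \<Rightarrow> bool" where
  "per2pi f \<longleftrightarrow> (\<forall>x. f (x + 2 * pi) = f x)"

definition smooth_fun :: "(real \<Rightarrow> real) \<Rightarrow> bool" where
  "smooth_fun f \<longleftrightarrow> (\<forall>k x. ((deriv ^^ k) f) differentiable (at x))"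

definition Lp_S1 :: "real \<Rightarrow> (real \<Rightarrow> real) \<Rightarrow> bool" where
  "Lp_S1 p g \<longleftrightarrow> g measurable_on {-pi..pi} \<and> (\<lambda>x. \<bar>g x\<bar> powr p) integrable_on {-pi..pi}"

text \<open>g is a (weak) derivative of f: f is the indefinite integral of g
  (the one-dimensional characterisation of W^{1,p}).\<close>
definition is_weak_deriv :: "(real \<Rightarrow> real) \<Rightarrow> (real \<Rightarrow> real) \<Rightarrow> bool" where
  "is_weak_deriv f g \<longleftrightarrow> (\<forall>a b. a \<le> b \<longrightarrow> (g has_integral (f b - f a)) {a..b})"

definition W1p_S1 :: "real \<Rightarrow> (real \<Rightarrow> real) \<Rightarrow> (real \<Rightarrow> real) \<Rightarrow> bool" where
  "W1p_S1 p w w' \<longleftrightarrow> per2pi w \<and> per2pi w' \<and> Lp_S1 p w \<and> Lp_S1 p w' \<and> is_weak_deriv w w'"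

definition W2p_pos_S1 :: "real \<Rightarrow> (real \<Rightarrow> real) \<Rightarrow> (real \<Rightarrow> real) \<Rightarrow> (real \<Rightarrow> real) \<Rightarrow> bool" where
  "W2p_pos_S1 p \<phi> \<phi>' \<phi>'' \<longleftrightarrow> (\<forall>x. \<phi> x > 0) \<and> W1p_S1 p \<phi> \<phi>' \<and> W1p_S1 p \<phi>' \<phi>''"

text \<open>lambda = -1 on (-pi,0), 1 on (0,pi), extended periodically (value at 0, pi irrelevant).\<close>
definition lam :: "real \<Rightarrow> real" where
  "lam x = (if sin x > 0 then 1 else if sin x < 0 then -1 else 0)"

definition tau :: "real \<Rightarrow> real \<Rightarrow> real" where
  "tau t x = t + lam x"

definition gammaN :: "(real \<Rightarrow> real) \<Rightarrow> real" where
  "gammaN N = - (integral {-pi..pi} (\<lambda>x. lam x * N x)) / integral {-pi..pi} N"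

definition qexp :: "nat \<Rightarrow> real" where
  "qexp n = 2 * real n / (real n - 2)"

definition kap :: "nat \<Rightarrow> real" where
  "kap n = (real n - 1) / real n"

text \<open>(phi,w) is a solution: phi in W^{2,p}_+, w in W^{1,p} for some p > 1; the first equation
  holds almost everywhere, the second in the sense of distributions on S^1, where
  phi^q tau_t' = 2 (phi(0)^q delta_0 - phi(pi)^q delta_pi) as phi is continuous.\<close>
definition is_solution ::
  "nat \<Rightarrow> (real \<Rightarrow> real) \<Rightarrow> real \<Rightarrow> real \<Rightarrow> real \<Rightarrow> (real \<Rightarrow> real) \<Rightarrow> (real \<Rightarrow> real) \<Rightarrow> bool" where
  "is_solution n N t \<eta> \<mu> \<phi> w \<longleftrightarrow>
    (\<exists>p > 1. \<exists>\<phi>' \<phi>'' w'.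
       W2p_pos_S1 p \<phi> \<phi>' \<phi>'' \<and> W1p_S1 p w w' \<and>
       (AE x in lborel.
          - 2 * kap n * qexp n * \<phi>'' x
          - 2 * \<eta>\<^sup>2 * \<phi> x powr (- qexp n - 1)
          - kap n * (\<mu> + w' x / (2 * N x))\<^sup>2 * \<phi> x powr (- qexp n - 1)
          + kap n * (tau t x)\<^sup>2 * \<phi> x powr (qexp n - 1) = 0) \<and>
       (\<forall>\<psi>. smooth_fun \<psi> \<and> per2pi \<psi> \<longrightarrow>
          - integral {-pi..pi} (\<lambda>x. w' x / (2 * N x) * deriv \<psi> x)
            = 2 * (\<phi> 0 powr qexp n * \<psi> 0 - \<phi> pi powr qexp n * \<psi> pi)))"

text \<open>Solutions differing by a constant added to w are identified.\<close>
definition same_solution :: "((real \<Rightarrow> real) \<times> (real \<Rightarrow> real)) \<Rightarrow> ((real \<Rightarrow> real) \<times> (real \<Rightarrow> real)) \<Rightarrow> bool" where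
  "same_solution s1 s2 \<longleftrightarrow> fst s1 = fst s2 \<and> (\<exists>c. \<forall>x. snd s1 x = snd s2 x + c)"

end

theory Submission
  imports Defs
begin

(* For \<eta> = \<mu> = 0 every constant \<phi> = s > 0 solves the system with w' = 2 N s^q \<tau>_t;
   this w is periodic precisely because t = \<gamma>_N gives N \<tau>_t mean zero.

   For \<mu> = 0 \<noteq> \<eta>, test the second equation against trigonometric polynomials, which are
   dense in the continuous periodic functions: v = w'/(2N) has the same integrals over all
   subintervals of [-\<pi>, \<pi>] as \<phi>(0)^q \<tau>_t (the additive constant vanishes since w' and
   N \<tau>_t have mean zero).  At a global minimum x0 of \<phi> we have \<phi>(x0)^q \<le> \<phi>(0)^q, so
   near x0 the terms in v^2 and \<tau>_t^2 almost cancel while -2 \<eta>^2 \<phi>^(-q-1) stays negative.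
   Bounding v^2 below by a tangent line, the first equation gives \<phi>'' \<le> -c < 0 in integrated
   form just to the right of x0; as \<phi>'(x0) = 0, \<phi> decreases there, contradicting minimality. *)

lemma per2pi_minus_pi: "per2pi f \<Longrightarrow> f (-pi) = f pi"
  unfolding per2pi_def by (metis add.commute diff_add_cancel mult_2 add_uminus_conv_diff)

lemma per2pi_shift_int:
  assumes "per2pi f"
  shows "f (x + real_of_int k * (2*pi)) = f x"
proof (induction k rule: int_induct[where k=0])
  case (step1 i)
  then show ?case using assms[unfolded per2pi_def, rule_format, of "x + real_of_int i * (2*pi)"]
    by (simp add: algebra_simps)
next
  case (step2 i)
  then show ?case using assms[unfolded per2pi_def, rule_format, of "x + real_of_int (i - 1) * (2*pi)"]
    by (simp add: algebra_simps)
qed simp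

lemma per2pi_value_in_period:
  assumes "per2pi f"
  obtains y where "-pi \<le> y" "y < pi" "f x = f y"
proof -
  define k where "k = \<lfloor>(x + pi) / (2*pi)\<rfloor>"
  have "real_of_int k \<le> (x + pi) / (2*pi)" "(x + pi) / (2*pi) < real_of_int k + 1"
    unfolding k_def by linarith+
  then have "-pi \<le> x - real_of_int k * (2*pi)" "x - real_of_int k * (2*pi) < pi"
    by (simp_all add: field_simps)
  moreover have "f x = f (x - real_of_int k * (2*pi))"
    using per2pi_shift_int[OF assms, of "x - real_of_int k * (2*pi)" k] by simp
  ultimately show ?thesis using that by blast
qed

lemma continuous_on_bounded_Icc:
  fixes f :: "real \<Rightarrow> real"
  assumes "continuous_on {a..b} f"
  obtains B where "\<And>x. x \<in> {a..b} \<Longrightarrow> \<bar>f x\<bar> \<le> B"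
proof -
  have "bounded (f ` {a..b})"
    by (rule compact_imp_bounded, rule compact_continuous_image[OF assms]) simp
  then show ?thesis using that unfolding bounded_real by blast
qed

lemma per2pi_bounded:
  fixes f :: "real \<Rightarrow> real"
  assumes "per2pi f" "continuous_on {-pi..pi} f"
  obtains B where "\<And>x. \<bar>f x\<bar> \<le> B"
proof -
  obtain B where B: "\<And>y. y \<in> {-pi..pi} \<Longrightarrow> \<bar>f y\<bar> \<le> B"
    using continuous_on_bounded_Icc[OF assms(2)] by blast
  have "\<bar>f x\<bar> \<le> B" for x
    by (rule per2pi_value_in_period[OF assms(1), of x]) (use B in auto)
  then show ?thesis by (rule that)
qed

lemma per2pi_attains_min:
  fixes f :: "real \<Rightarrow> real"
  assumes "per2pi f" "continuous_on {-pi..pi} f"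
  obtains x0 where "-pi \<le> x0" "x0 < pi" "\<And>y. f x0 \<le> f y"
proof -
  obtain x1 where x1: "x1 \<in> {-pi..pi}" "\<And>y. y \<in> {-pi..pi} \<Longrightarrow> f x1 \<le> f y"
    using continuous_attains_inf[OF compact_Icc _ assms(2)] by auto
  obtain x0 where x0: "-pi \<le> x0" "x0 < pi" "f x1 = f x0"
    using per2pi_value_in_period[OF assms(1)] by blast
  have "f x0 \<le> f y" for y
    by (rule per2pi_value_in_period[OF assms(1), of y]) (use x0 x1 in auto)
  with x0 show ?thesis using that by blast
qed

lemma has_integral_real_derivative:
  assumes "\<And>x. (f has_real_derivative f' x) (at x)" and "a \<le> b"
  shows "(f' has_integral (f b - f a)) {a..b}"
  by (rule fundamental_theorem_of_calculus[OF \<open>a \<le> b\<close>])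
     (use assms in \<open>auto simp: has_real_derivative_iff_has_vector_derivative[symmetric]
                         intro: has_field_derivative_at_within\<close>)

lemma smooth_fun_isCont: "smooth_fun f \<Longrightarrow> isCont f x"
  unfolding smooth_fun_def by (metis differentiable_imp_continuous_within funpow_0)

lemma smooth_fun_has_real_derivative: "smooth_fun f \<Longrightarrow> (f has_real_derivative deriv f x) (at x)"
  unfolding smooth_fun_def by (metis DERIV_deriv_iff_real_differentiable funpow_0)

lemma smooth_fun_isCont_deriv: "smooth_fun f \<Longrightarrow> isCont (deriv f) x"
  unfolding smooth_fun_def using differentiable_imp_continuous_within[of "deriv f" x UNIV]
  by (metis funpow_0 funpow_Suc_right o_apply)

lemma borel_measurable_lebesgue_on:
  fixes f :: "real \<Rightarrow> real"
  assumes "f \<in> borel_measurable borel"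
  shows "f \<in> borel_measurable (lebesgue_on S)"
proof -
  have "f \<in> borel_measurable lebesgue" using assms by (simp add: measurable_completion)
  then show ?thesis by (rule measurable_restrict_space1)
qed

lemma integrable_if_bounded_measurable:
  fixes f :: "real \<Rightarrow> real"
  assumes "f \<in> borel_measurable borel" "\<And>x. x \<in> {a..b} \<Longrightarrow> \<bar>f x\<bar> \<le> B"
  shows "f integrable_on {a..b}"
  by (rule measurable_bounded_by_integrable_imp_integrable_real[
        OF borel_measurable_lebesgue_on[OF assms(1)] integrable_const_ivl[of B a b]])
     (use assms(2) in auto)

lemma absolutely_integrable_if_bounded_measurable:
  fixes f :: "real \<Rightarrow> real"
  assumes "f \<in> borel_measurable borel" "\<And>x. x \<in> {a..b} \<Longrightarrow> \<bar>f x\<bar> \<le> B"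
  shows "f absolutely_integrable_on {a..b}"
  by (rule measurable_bounded_by_integrable_imp_absolutely_integrable[
        OF borel_measurable_lebesgue_on[OF assms(1)] _ integrable_const_ivl[of B a b]])
     (use assms(2) in auto)

lemma absolutely_integrable_continuous_mult:
  fixes k g :: "real \<Rightarrow> real"
  assumes "continuous_on {a..b} k" "g absolutely_integrable_on {a..b}"
  shows "(\<lambda>x. k x * g x) absolutely_integrable_on {a..b}"
proof (rule absolutely_integrable_bounded_measurable_product_real)
  show "k \<in> borel_measurable (lebesgue_on {a..b})"
    by (rule continuous_imp_measurable_on_sets_lebesgue[OF assms(1)]) simp
  show "bounded (k ` {a..b})"
    by (rule compact_imp_bounded, rule compact_continuous_image[OF assms(1)]) simp
qed (use assms in auto)

lemma integrable_mult_continuous: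
  fixes k g :: "real \<Rightarrow> real"
  assumes "continuous_on {a..b} k" "g absolutely_integrable_on {a..b}"
  shows "(\<lambda>x. g x * k x) integrable_on {a..b}"
  using absolutely_integrable_continuous_mult[OF assms]
  by (simp add: absolutely_integrable_on_def mult.commute)

lemma Lp_S1_2_if_bounded_measurable:
  fixes f :: "real \<Rightarrow> real"
  assumes f: "f \<in> borel_measurable borel" and B: "\<And>x. x \<in> {-pi..pi} \<Longrightarrow> \<bar>f x\<bar> \<le> B"
  shows "Lp_S1 2 f"
  unfolding Lp_S1_def
proof
  show "f measurable_on {-pi..pi}"
    by (rule measurable_on_iff_borel_measurable[THEN iffD2]) (auto intro: borel_measurable_lebesgue_on f)
  show "(\<lambda>x. \<bar>f x\<bar> powr 2) integrable_on {-pi..pi}"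
  proof (rule integrable_if_bounded_measurable)
    show "(\<lambda>x. \<bar>f x\<bar> powr 2) \<in> borel_measurable borel" using f by measurable
    show "\<bar>\<bar>f x\<bar> powr 2\<bar> \<le> \<bar>B\<bar> powr 2" if "x \<in> {-pi..pi}" for x
    proof -
      have "\<bar>f x\<bar> \<le> \<bar>B\<bar>" using B[OF that] by simp
      then have "\<bar>f x\<bar> powr 2 \<le> \<bar>B\<bar> powr 2" by (intro powr_mono2) auto
      then show ?thesis by simp
    qed
  qed
qed

lemma Lp_S1_absolutely_integrable:
  fixes f :: "real \<Rightarrow> real"
  assumes "Lp_S1 p f" "p \<ge> 1"
  shows "f absolutely_integrable_on {-pi..pi}"
proof (rule measurable_bounded_by_integrable_imp_absolutely_integrable)
  show "f \<in> borel_measurable (lebesgue_on {-pi..pi})"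
    using assms(1) measurable_on_iff_borel_measurable[of "{-pi..pi}" f] by (simp add: Lp_S1_def)
  show "(\<lambda>x. 1 + \<bar>f x\<bar> powr p) integrable_on {-pi..pi}"
    using assms(1) by (intro integrable_add integrable_const_ivl) (simp add: Lp_S1_def)
  show "norm (f x) \<le> 1 + \<bar>f x\<bar> powr p" for x
  proof (cases "\<bar>f x\<bar> \<le> 1")
    case True then show ?thesis using powr_ge_zero[of "\<bar>f x\<bar>" p] unfolding real_norm_def by linarith
  next
    case False
    then have "\<bar>f x\<bar> powr 1 \<le> \<bar>f x\<bar> powr p" using assms(2) by (intro powr_mono) auto
    then show ?thesis using False by simp
  qed
qed simp

lemma tendsto_if_dist_less_inverse_Suc:
  fixes f :: "nat \<Rightarrow> real"
  assumes "\<And>k. \<bar>l - f k\<bar> < 1 / real (Suc k)"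
  shows "f \<longlonglongrightarrow> l"
proof -
  have "(\<lambda>k. l - f k) \<longlonglongrightarrow> 0" by (rule LIMSEQ_norm_0) (use assms in simp)
  then show ?thesis using tendsto_diff[OF tendsto_const[of l], of "\<lambda>k. l - f k" 0] by simp
qed

lemma integral_pos_if_pos:
  fixes f :: "real \<Rightarrow> real"
  assumes "continuous_on {a..b} f" "\<And>x. f x > 0" "a < b"
  shows "integral {a..b} f > 0"
proof -
  have "integral {a..b} f \<noteq> 0"
    using integral_eq_0_iff[OF assms(1)] assms(2,3) by (metis atLeastAtMost_iff less_eq_real_def less_irrefl)
  moreover have "integral {a..b} f \<ge> 0"
    using assms(1,2) by (intro integral_nonneg integrable_continuous_real) (auto intro: less_imp_le)
  ultimately show ?thesis by simp
qed

lemma integral_le_AE: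
  fixes f g :: "real \<Rightarrow> real"
  assumes f: "f integrable_on {a..b}" and g: "g integrable_on {a..b}" and Z: "negligible Z"
    and le: "\<And>x. x \<in> {a<..<b} \<Longrightarrow> x \<notin> Z \<Longrightarrow> f x \<le> g x"
  shows "integral {a..b} f \<le> integral {a..b} g"
proof -
  define f' where "f' x = (if x \<in> Z \<union> {a, b} then g x else f x)" for x
  have Z': "negligible (Z \<union> {a, b})" using Z by auto
  have eq: "\<And>x. x \<in> {a..b} - (Z \<union> {a, b}) \<Longrightarrow> f' x = f x" unfolding f'_def by auto
  have "integral {a..b} f = integral {a..b} f'" by (rule integral_spike[OF Z' eq])
  also have "\<dots> \<le> integral {a..b} g"
    by (rule integral_le[OF integrable_spike[OF f Z' eq] g]) (use le in \<open>auto simp: f'_def\<close>)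
  finally show ?thesis .
qed

lemma exists_gt_powr_close:
  fixes m e r :: real
  assumes "m > 0" "e > 0"
  obtains b where "m < b" "b powr r - m powr r < e"
proof -
  have "isCont (\<lambda>u. u powr r) m" using assms(1) by (intro continuous_intros) auto
  then obtain d where d: "d > 0" "\<And>u. u \<noteq> m \<Longrightarrow> norm (u - m) < d \<Longrightarrow> norm (u powr r - m powr r) < e"
    using assms(2) unfolding isCont_def LIM_eq by blast
  show ?thesis by (rule that[of "m + d / 2"]) (use d(1) d(2)[of "m + d / 2"] in auto)
qed

lemma isCont_le_right:
  fixes f :: "real \<Rightarrow> real"
  assumes "isCont f x0" "f x0 < b" "x0 < y"
  obtains x1 where "x0 < x1" "x1 \<le> y" "\<And>x. x \<in> {x0..x1} \<Longrightarrow> f x \<le> b"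
proof -
  obtain d where d: "d > 0" "\<And>x. x \<noteq> x0 \<Longrightarrow> norm (x - x0) < d \<Longrightarrow> norm (f x - f x0) < b - f x0"
    using assms(1,2) unfolding isCont_def LIM_eq by (metis diff_gt_0_iff_gt)
  show ?thesis
  proof (rule that[of "min y (x0 + d / 2)"])
    fix x assume x: "x \<in> {x0..min y (x0 + d / 2)}"
    show "f x \<le> b"
    proof (cases "x = x0")
      case False
      then show ?thesis using d(2)[of x] x d(1) by auto
    qed (use assms(2) in simp)
  qed (use d(1) assms(3) in auto)
qed

lemma decreasing_if_derivative_le_linear:
  assumes d: "\<And>x. (f has_real_derivative f' x) (at x)" and ab: "a < b" and c: "c > 0"
    and le: "\<And>s. s \<in> {a..b} \<Longrightarrow> f' s \<le> - c * (s - a)"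
  shows "f b < f a"
proof -
  define h where "h s = f s + c * (s - a)\<^sup>2 / 2" for s
  have "h b \<le> h a"
  proof (rule DERIV_nonpos_imp_nonincreasing[OF less_imp_le[OF ab]])
    fix s assume "a \<le> s" "s \<le> b"
    have "(h has_real_derivative f' s + c * (s - a)) (at s)"
      unfolding h_def by (rule derivative_eq_intros d refl | simp)+
    moreover have "f' s + c * (s - a) \<le> 0" using le[of s] \<open>a \<le> s\<close> \<open>s \<le> b\<close> by simp
    ultimately show "\<exists>y. (h has_real_derivative y) (at s) \<and> y \<le> 0" by blast
  qed
  moreover have "0 < c * (b - a)\<^sup>2 / 2" using ab c by simp
  ultimately show ?thesis unfolding h_def by simp
qed

section \<open>Trigonometric polynomials\<close>

definition trig_poly :: "(real \<Rightarrow> real) set" where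
  "trig_poly = {f. \<exists>n a b. \<forall>x. f x = (\<Sum>k\<le>n. a k * cos (real k * x) + b k * sin (real k * x))}"

lemma trig_polyI:
  "(\<And>x. f x = (\<Sum>k\<le>n. a k * cos (real k * x) + b k * sin (real k * x))) \<Longrightarrow> f \<in> trig_poly"
  unfolding trig_poly_def by blast

lemma sum_atMost_if_le:
  fixes T :: "nat \<Rightarrow> 'a::comm_monoid_add"
  assumes "m \<le> n"
  shows "(\<Sum>k\<le>n. if k \<le> m then T k else 0) = (\<Sum>k\<le>m. T k)"
proof -
  have "(\<Sum>k\<le>n. if k \<le> m then T k else 0) = (\<Sum>k\<in>{..n} \<inter> {k. k \<le> m}. T k)"
    by (subst sum.inter_restrict) auto
  also have "{..n} \<inter> {k. k \<le> m} = {..m}" using assms by auto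
  finally show ?thesis .
qed

lemma trig_poly_add: "f \<in> trig_poly \<Longrightarrow> g \<in> trig_poly \<Longrightarrow> (\<lambda>x. f x + g x) \<in> trig_poly"
proof -
  assume "f \<in> trig_poly" "g \<in> trig_poly"
  then obtain n1 a1 b1 n2 a2 b2
    where f: "\<And>x. f x = (\<Sum>k\<le>n1. a1 k * cos (real k * x) + b1 k * sin (real k * x))"
      and g: "\<And>x. g x = (\<Sum>k\<le>n2. a2 k * cos (real k * x) + b2 k * sin (real k * x))"
    unfolding trig_poly_def by blast
  define a where "a k = (if k \<le> n1 then a1 k else 0) + (if k \<le> n2 then a2 k else 0)" for k
  define b where "b k = (if k \<le> n1 then b1 k else 0) + (if k \<le> n2 then b2 k else 0)" for k
  have "f x + g x = (\<Sum>k\<le>n1+n2. a k * cos (real k * x) + b k * sin (real k * x))" for x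
  proof -
    have "(\<Sum>k\<le>n1+n2. a k * cos (real k * x) + b k * sin (real k * x))
       = (\<Sum>k\<le>n1+n2. if k \<le> n1 then a1 k * cos (real k * x) + b1 k * sin (real k * x) else 0)
       + (\<Sum>k\<le>n1+n2. if k \<le> n2 then a2 k * cos (real k * x) + b2 k * sin (real k * x) else 0)"
      unfolding a_def b_def sum.distrib[symmetric] by (rule sum.cong) (auto simp: algebra_simps)
    then show ?thesis unfolding f g by (simp add: sum_atMost_if_le)
  qed
  then show ?thesis by (rule trig_polyI)
qed

lemma trig_poly_cmult: "f \<in> trig_poly \<Longrightarrow> (\<lambda>x. c * f x) \<in> trig_poly"
proof -
  assume "f \<in> trig_poly"
  then obtain n a b where f: "\<And>x. f x = (\<Sum>k\<le>n. a k * cos (real k * x) + b k * sin (real k * x))"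
    unfolding trig_poly_def by blast
  have "c * f x = (\<Sum>k\<le>n. (c * a k) * cos (real k * x) + (c * b k) * sin (real k * x))" for x
    unfolding f sum_distrib_left by (simp add: algebra_simps)
  then show ?thesis by (rule trig_polyI)
qed

lemma trig_poly_divide: "f \<in> trig_poly \<Longrightarrow> (\<lambda>x. f x / c) \<in> trig_poly"
  using trig_poly_cmult[of f "inverse c"] by (simp add: divide_inverse mult.commute)

lemma trig_poly_diff: "f \<in> trig_poly \<Longrightarrow> g \<in> trig_poly \<Longrightarrow> (\<lambda>x. f x - g x) \<in> trig_poly"
  using trig_poly_add[of f "\<lambda>x. - 1 * g x"] trig_poly_cmult[of g "- 1"] by simp

lemma trig_poly_cos: "(\<lambda>x. cos (real m * x)) \<in> trig_poly"
proof (rule trig_polyI)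
  fix x
  have "(\<Sum>k\<le>m. (if k = m then 1 else 0) * cos (real k * x) + 0 * sin (real k * x))
      = (\<Sum>k\<le>m. if k = m then cos (real k * x) else 0)"
    by (rule sum.cong) auto
  then show "cos (real m * x) = (\<Sum>k\<le>m. (if k = m then 1 else 0) * cos (real k * x) + 0 * sin (real k * x))"
    by simp
qed

lemma trig_poly_sin: "(\<lambda>x. sin (real m * x)) \<in> trig_poly"
proof (rule trig_polyI)
  fix x
  have "(\<Sum>k\<le>m. 0 * cos (real k * x) + (if k = m then 1 else 0) * sin (real k * x))
      = (\<Sum>k\<le>m. if k = m then sin (real k * x) else 0)"
    by (rule sum.cong) auto
  then show "sin (real m * x) = (\<Sum>k\<le>m. 0 * cos (real k * x) + (if k = m then 1 else 0) * sin (real k * x))"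
    by simp
qed

lemma trig_poly_const: "(\<lambda>x. c) \<in> trig_poly"
  using trig_poly_cmult[OF trig_poly_cos[of 0], of c] by simp

lemma trig_poly_sum:
  "finite I \<Longrightarrow> (\<And>i. i \<in> I \<Longrightarrow> f i \<in> trig_poly) \<Longrightarrow> (\<lambda>x. \<Sum>i\<in>I. f i x) \<in> trig_poly"
  by (induction I rule: finite_induct) (auto intro: trig_poly_const trig_poly_add)

lemma trig_poly_cos_int: "(\<lambda>x. cos (real_of_int m * x)) \<in> trig_poly"
proof (cases "0 \<le> m")
  case True
  then show ?thesis using trig_poly_cos[of "nat m"] by simp
next
  case False
  define k where "k = nat (- m)"
  then have "m = - int k" using False by simp
  then have "(\<lambda>x. cos (real_of_int m * x)) = (\<lambda>x. cos (real k * x))" by simp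
  then show ?thesis using trig_poly_cos by simp
qed

lemma trig_poly_sin_int: "(\<lambda>x. sin (real_of_int m * x)) \<in> trig_poly"
proof (cases "0 \<le> m")
  case True
  then show ?thesis using trig_poly_sin[of "nat m"] by simp
next
  case False
  define k where "k = nat (- m)"
  then have "m = - int k" using False by simp
  then have "(\<lambda>x. sin (real_of_int m * x)) = (\<lambda>x. - 1 * sin (real k * x))" by simp
  then show ?thesis using trig_poly_cmult[OF trig_poly_sin, of "- 1" k] by (simp only:)
qed

lemma trig_poly_mode_products:
  fixes j k :: nat
  shows "(\<lambda>x. cos (real j * x) * cos (real k * x)) \<in> trig_poly"
    and "(\<lambda>x. cos (real j * x) * sin (real k * x)) \<in> trig_poly"
    and "(\<lambda>x. sin (real j * x) * cos (real k * x)) \<in> trig_poly"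
    and "(\<lambda>x. sin (real j * x) * sin (real k * x)) \<in> trig_poly"
proof -
  have diff: "real j * x - real k * x = real_of_int (int j - int k) * x"
    and add: "real j * x + real k * x = real_of_int (int j + int k) * x" for x
    by (simp_all add: algebra_simps)
  note modes = trig_poly_add trig_poly_diff trig_poly_divide trig_poly_cos_int trig_poly_sin_int
  show "(\<lambda>x. cos (real j * x) * cos (real k * x)) \<in> trig_poly"
    unfolding cos_times_cos diff add by (intro modes)
  show "(\<lambda>x. cos (real j * x) * sin (real k * x)) \<in> trig_poly"
    unfolding cos_times_sin diff add by (intro modes)
  show "(\<lambda>x. sin (real j * x) * cos (real k * x)) \<in> trig_poly"
    unfolding sin_times_cos diff add by (intro modes)
  show "(\<lambda>x. sin (real j * x) * sin (real k * x)) \<in> trig_poly"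
    unfolding sin_times_sin diff add by (intro modes)
qed

lemma trig_poly_mult: "f \<in> trig_poly \<Longrightarrow> g \<in> trig_poly \<Longrightarrow> (\<lambda>x. f x * g x) \<in> trig_poly"
proof -
  assume "f \<in> trig_poly" "g \<in> trig_poly"
  then obtain n1 a1 b1 n2 a2 b2
    where f: "\<And>x. f x = (\<Sum>j\<le>n1. a1 j * cos (real j * x) + b1 j * sin (real j * x))"
      and g: "\<And>x. g x = (\<Sum>k\<le>n2. a2 k * cos (real k * x) + b2 k * sin (real k * x))"
    unfolding trig_poly_def by blast
  have "f x * g x = (\<Sum>j\<le>n1. \<Sum>k\<le>n2.
      (a1 j * a2 k) * (cos (real j * x) * cos (real k * x))
    + (a1 j * b2 k) * (cos (real j * x) * sin (real k * x))
    + (b1 j * a2 k) * (sin (real j * x) * cos (real k * x))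
    + (b1 j * b2 k) * (sin (real j * x) * sin (real k * x)))" for x
    unfolding f g sum_product by (intro sum.cong refl) (simp add: algebra_simps)
  then show ?thesis
    by (simp only:) (intro trig_poly_sum trig_poly_add trig_poly_cmult trig_poly_mode_products finite_atMost)
qed

lemma has_real_derivative_mode:
  "((\<lambda>x. a * cos (real k * x) + b * sin (real k * x)) has_real_derivative
      (b * real k) * cos (real k * x) + (- a * real k) * sin (real k * x)) (at x)"
  by (rule derivative_eq_intros refl | simp)+

lemma trig_poly_has_derivative:
  assumes "f \<in> trig_poly"
  shows "\<exists>f'\<in>trig_poly. \<forall>x. (f has_real_derivative f' x) (at x)"
proof -
  obtain n a b where "\<And>x. f x = (\<Sum>k\<le>n. a k * cos (real k * x) + b k * sin (real k * x))"
    using assms unfolding trig_poly_def by blast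
  then have f: "f = (\<lambda>x. \<Sum>k\<le>n. a k * cos (real k * x) + b k * sin (real k * x))" by (rule ext)
  define f' where "f' x = (\<Sum>k\<le>n. (b k * real k) * cos (real k * x) + (- a k * real k) * sin (real k * x))" for x
  have "(f has_real_derivative f' x) (at x)" for x
    unfolding f f'_def by (intro DERIV_sum has_real_derivative_mode)
  moreover have "f' \<in> trig_poly" unfolding f'_def by (rule trig_polyI) (rule refl)
  ultimately show ?thesis by blast
qed

lemma trig_poly_deriv:
  assumes "f \<in> trig_poly"
  shows "deriv f \<in> trig_poly" and "(f has_real_derivative deriv f x) (at x)"
proof -
  obtain f' where f': "f' \<in> trig_poly" "\<And>x. (f has_real_derivative f' x) (at x)"
    using trig_poly_has_derivative[OF assms] by blast
  then have "deriv f = f'" by (intro ext DERIV_imp_deriv)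
  then show "deriv f \<in> trig_poly" and "(f has_real_derivative deriv f x) (at x)" using f' by simp_all
qed

lemma continuous_on_trig_poly: "f \<in> trig_poly \<Longrightarrow> continuous_on S f"
  by (meson DERIV_isCont continuous_at_imp_continuous_on trig_poly_deriv(2))

lemma smooth_fun_trig_poly: "f \<in> trig_poly \<Longrightarrow> smooth_fun f"
proof -
  assume "f \<in> trig_poly"
  then have "(deriv ^^ k) f \<in> trig_poly" for k by (induction k) (auto intro: trig_poly_deriv(1))
  then show ?thesis
    unfolding smooth_fun_def using trig_poly_deriv(2) real_differentiable_def by blast
qed

lemma per2pi_trig_poly:
  assumes "f \<in> trig_poly"
  shows "per2pi f"
proof -
  obtain n a b where f: "\<And>x. f x = (\<Sum>k\<le>n. a k * cos (real k * x) + b k * sin (real k * x))"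
    using assms unfolding trig_poly_def by blast
  have "real k * (x + 2 * pi) = real k * x + 2 * real k * pi" for k x by (simp add: algebra_simps)
  then show ?thesis unfolding per2pi_def f by (simp add: cos_add sin_add)
qed

lemma trig_poly_has_primitive:
  assumes "p \<in> trig_poly"
  obtains c \<psi> where "\<psi> \<in> trig_poly" "\<And>x. (\<psi> has_real_derivative p x - c) (at x)"
proof -
  obtain n a b where p: "\<And>x. p x = (\<Sum>k\<le>n. a k * cos (real k * x) + b k * sin (real k * x))"
    using assms unfolding trig_poly_def by blast
  define a' where "a' k = (if k = 0 then 0 else - b k / real k)" for k
  define b' where "b' k = (if k = 0 then 0 else a k / real k)" for k
  define \<psi> where "\<psi> x = (\<Sum>k\<le>n. a' k * cos (real k * x) + b' k * sin (real k * x))" for x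
  have "(\<psi> has_real_derivative p x - a 0) (at x)" for x
  proof -
    have "(\<psi> has_real_derivative
        (\<Sum>k\<le>n. b' k * real k * cos (real k * x) + - a' k * real k * sin (real k * x))) (at x)"
      unfolding \<psi>_def by (intro DERIV_sum has_real_derivative_mode)
    moreover have "(\<Sum>k\<le>n. b' k * real k * cos (real k * x) + - a' k * real k * sin (real k * x))
        = (\<Sum>k\<le>n. if k = 0 then 0 else a k * cos (real k * x) + b k * sin (real k * x))"
      by (rule sum.cong) (auto simp: a'_def b'_def)
    moreover have "p x = (\<Sum>k\<le>n. if k = 0 then a k * cos (real k * x) + b k * sin (real k * x) else 0)
        + (\<Sum>k\<le>n. if k = 0 then 0 else a k * cos (real k * x) + b k * sin (real k * x))"
      unfolding p sum.distrib[symmetric] by (rule sum.cong) auto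
    ultimately show ?thesis by simp
  qed
  moreover have "\<psi> \<in> trig_poly" unfolding \<psi>_def by (rule trig_polyI) (rule refl)
  ultimately show ?thesis using that by blast
qed

lemma trig_poly_primitive:
  assumes p: "p \<in> trig_poly"
  obtains \<psi> where "\<psi> \<in> trig_poly" "\<And>x. deriv \<psi> x = p x - integral {-pi..pi} p / (2 * pi)"
proof -
  obtain c \<psi> where \<psi>: "\<psi> \<in> trig_poly" "\<And>x. (\<psi> has_real_derivative p x - c) (at x)"
    using trig_poly_has_primitive[OF p] by blast
  have "((\<lambda>x. p x - c) has_integral 0) {-pi..pi}"
    using has_integral_real_derivative[OF \<psi>(2), of "-pi" pi] per2pi_minus_pi[OF per2pi_trig_poly[OF \<psi>(1)]]
    by simp
  moreover have "((\<lambda>x. p x - c) has_integral integral {-pi..pi} p - 2 * pi * c) {-pi..pi}"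
    using has_integral_const_real[of c "-pi" pi] continuous_on_trig_poly[OF p]
    by (auto intro!: has_integral_diff integrable_integral integrable_continuous_real)
  ultimately have "integral {-pi..pi} p - 2 * pi * c = 0"
    by (metis has_integral_unique)
  then have "c = integral {-pi..pi} p / (2 * pi)" by (simp add: field_simps)
  then show ?thesis using that \<psi> DERIV_imp_deriv by blast
qed

lemma trig_poly_real_polynomial_function_cis:
  "real_polynomial_function g \<Longrightarrow> (\<lambda>x. g (cis x)) \<in> trig_poly"
proof (induction g rule: real_polynomial_function.induct)
  case (linear f)
  have "cis x = cos x *\<^sub>R 1 + sin x *\<^sub>R \<i>" for x by (simp add: complex_eq_iff)
  then have "f (cis x) = f 1 * cos (real 1 * x) + f \<i> * sin (real 1 * x)" for x
    using linear by (simp add: linear_add linear_scale bounded_linear.linear)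
  then show ?case
    by (simp only:) (intro trig_poly_add trig_poly_cmult trig_poly_cos trig_poly_sin)
next
  case (const c)
  show ?case by (rule trig_poly_const)
next
  case (add f g)
  from add.IH show ?case by (rule trig_poly_add)
next
  case (mult f g)
  from mult.IH show ?case by (rule trig_poly_mult)
qed

text \<open>At \<open>-1\<close>, where \<open>Arg\<close> jumps, use \<open>Arg (-z)\<close> and the half-turn shift of \<open>h\<close>.\<close>

lemma continuous_on_sphere_Arg:
  assumes hc: "continuous_on {-pi..pi} h" and hp: "h (-pi) = h pi"
  shows "continuous_on (sphere 0 1) (\<lambda>z. h (Arg z))"
proof -
  have hw: "continuous (at y within T) h" if "y \<in> {-pi..pi}" "T \<subseteq> {-pi..pi}" for y T
    using hc that continuous_on_eq_continuous_within continuous_within_subset by blast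
  have Arg_in: "Arg z \<in> {-pi..pi}" for z using Arg_bounded[of z] by auto
  define h2 where "h2 y = (if y \<le> 0 then h (y + pi) else h (y - pi))" for y
  have h2c: "continuous_on {-pi..pi} h2"
    unfolding h2_def
  proof (rule continuous_on_cases_le)
    show "continuous_on {t \<in> {- pi..pi}. t \<le> 0} (\<lambda>t. h (t + pi))"
      by (rule continuous_on_compose2[OF hc]) (auto intro!: continuous_intros)
    show "continuous_on {t \<in> {- pi..pi}. 0 \<le> t} (\<lambda>t. h (t - pi))"
      by (rule continuous_on_compose2[OF hc]) (auto intro!: continuous_intros)
  qed (auto intro!: continuous_intros simp: hp)
  have h2w: "continuous (at y within T) h2" if "y \<in> {-pi..pi}" "T \<subseteq> {-pi..pi}" for y T
    using h2c that continuous_on_eq_continuous_within continuous_within_subset by blast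
  have h2_Arg: "h (Arg z) = h2 (Arg (-z))" if "z \<noteq> 0" for z
    using Arg_minus[OF that] Arg_bounded[of z] unfolding h2_def by auto
  show ?thesis
    unfolding continuous_on_eq_continuous_within
  proof
    fix z0 :: complex assume z0: "z0 \<in> sphere 0 1"
    show "continuous (at z0 within sphere 0 1) (\<lambda>z. h (Arg z))"
    proof (cases "z0 \<in> \<real>\<^sub>\<le>\<^sub>0")
      case False
      show ?thesis
        by (rule continuous_within_compose2[OF continuous_within_Arg[OF False]], rule hw, use Arg_in in auto)
    next
      case True
      then have "z0 = -1" using z0 by (auto simp: nonpos_Reals_def dist_norm)
      then have m: "-z0 \<notin> \<real>\<^sub>\<le>\<^sub>0" by auto
      have "continuous (at z0 within sphere 0 1) (\<lambda>z. h2 (Arg (-z)))"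
      proof (rule continuous_within_compose2[of _ _ "\<lambda>z. Arg (-z)"])
        show "continuous (at z0 within sphere 0 1) (\<lambda>z. Arg (- z))"
          by (rule continuous_within_compose2[of _ _ uminus], intro continuous_intros)
             (rule continuous_within_Arg[OF m])
      qed (rule h2w, use Arg_in in auto)
      then show ?thesis
        by (rule continuous_transform_within[of _ _ _ "1/2"]) (use z0 h2_Arg in \<open>auto, metis norm_zero zero_neq_one\<close>)
    qed
  qed
qed

lemma trig_poly_dense:
  assumes "continuous_on {-pi..pi} h" and "h (-pi) = h pi" and "e > 0"
  obtains p where "p \<in> trig_poly" "\<And>x. x \<in> {-pi..pi} \<Longrightarrow> \<bar>h x - p x\<bar> < e"
proof -
  obtain g where g: "real_polynomial_function g" "\<And>z. z \<in> sphere 0 1 \<Longrightarrow> \<bar>h (Arg z) - g z\<bar> < e"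
    using Stone_Weierstrass_real_polynomial_function[OF compact_sphere
        continuous_on_sphere_Arg[OF assms(1,2)] assms(3)] by metis
  have "\<bar>h x - g (cis x)\<bar> < e" if x: "x \<in> {-pi..pi}" for x
  proof -
    have "h (Arg (cis x)) = h x"
    proof (cases "x = -pi")
      case True
      then have "cis x = cis pi" by (simp add: complex_eq_iff)
      then show ?thesis using True assms(2) Arg_cis[of pi] by simp
    next
      case False
      then show ?thesis using x Arg_cis[of x] by simp
    qed
    then show ?thesis using g(2)[of "cis x"] by simp
  qed
  then show ?thesis by (rule that[OF trig_poly_real_polynomial_function_cis[OF g(1)]])
qed

section \<open>The du Bois-Reymond lemma on the circle\<close>

lemma trig_poly_approximating_sequence:
  assumes "continuous_on {-pi..pi} h" "h (-pi) = h pi"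
  obtains p B where "\<And>k. p k \<in> trig_poly" "\<And>k x. x \<in> {-pi..pi} \<Longrightarrow> \<bar>p k x\<bar> \<le> B"
    "\<And>x. x \<in> {-pi..pi} \<Longrightarrow> (\<lambda>k. p k x) \<longlonglongrightarrow> h x"
proof -
  have "\<forall>k. \<exists>p. p \<in> trig_poly \<and> (\<forall>x\<in>{-pi..pi}. \<bar>h x - p x\<bar> < 1 / real (Suc k))"
    using trig_poly_dense[OF assms] by (metis of_nat_0_less_iff zero_less_Suc zero_less_divide_1_iff)
  then obtain p where p: "\<And>k. p k \<in> trig_poly"
    and close: "\<And>k x. x \<in> {-pi..pi} \<Longrightarrow> \<bar>h x - p k x\<bar> < 1 / real (Suc k)"
    by metis
  obtain B where B: "\<And>x. x \<in> {-pi..pi} \<Longrightarrow> \<bar>h x\<bar> \<le> B"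
    using continuous_on_bounded_Icc[OF assms(1)] by blast
  show ?thesis
  proof (rule that[OF p])
    show "\<bar>p k x\<bar> \<le> B + 1" if "x \<in> {-pi..pi}" for k x
    proof -
      have "1 / real (Suc k) \<le> 1" by simp
      then show ?thesis using close[OF that, of k] B[OF that] by linarith
    qed
    show "(\<lambda>k. p k x) \<longlonglongrightarrow> h x" if "x \<in> {-pi..pi}" for x
      by (rule tendsto_if_dist_less_inverse_Suc) (rule close[OF that])
  qed
qed

lemma tendsto_integral_mult:
  fixes g h :: "real \<Rightarrow> real"
  assumes g: "g absolutely_integrable_on {a..b}" and p: "\<And>k. continuous_on {a..b} (p k)"
    and B: "\<And>k x. x \<in> {a..b} \<Longrightarrow> \<bar>p k x\<bar> \<le> B"
    and lim: "\<And>x. x \<in> {a..b} \<Longrightarrow> (\<lambda>k. p k x) \<longlonglongrightarrow> h x"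
  shows "(\<lambda>k. integral {a..b} (\<lambda>x. g x * p k x)) \<longlonglongrightarrow> integral {a..b} (\<lambda>x. g x * h x)"
proof (rule dominated_convergence(2))
  show "(\<lambda>x. g x * p k x) integrable_on {a..b}" for k
    by (rule integrable_mult_continuous[OF p g])
  show "(\<lambda>x. B * \<bar>g x\<bar>) integrable_on {a..b}"
    using g by (intro integrable_on_mult_right) (simp add: absolutely_integrable_on_def)
  show "norm (g x * p k x) \<le> B * \<bar>g x\<bar>" if "x \<in> {a..b}" for k x
  proof -
    have "\<bar>g x\<bar> * \<bar>p k x\<bar> \<le> \<bar>g x\<bar> * B" using B[OF that, of k] by (rule mult_left_mono) simp
    then show ?thesis by (simp add: abs_mult mult.commute)
  qed
  show "(\<lambda>k. g x * p k x) \<longlonglongrightarrow> g x * h x" if "x \<in> {a..b}" for x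
    by (intro tendsto_mult tendsto_const lim that)
qed

lemma integral_mult_trig_poly_eq_mean:
  fixes g :: "real \<Rightarrow> real"
  assumes g: "g absolutely_integrable_on {-pi..pi}"
    and test: "\<And>\<psi>. \<psi> \<in> trig_poly \<Longrightarrow> integral {-pi..pi} (\<lambda>x. g x * deriv \<psi> x) = 0"
    and p: "p \<in> trig_poly"
  shows "integral {-pi..pi} (\<lambda>x. g x * p x) = integral {-pi..pi} g / (2*pi) * integral {-pi..pi} p"
proof -
  define c where "c = integral {-pi..pi} p / (2 * pi)"
  obtain \<psi> where \<psi>: "\<psi> \<in> trig_poly" "\<And>x. deriv \<psi> x = p x - c"
    using trig_poly_primitive[OF p] unfolding c_def by blast
  have "0 = integral {-pi..pi} (\<lambda>x. g x * p x - c * g x)"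
    using test[OF \<psi>(1)] by (simp add: \<psi>(2) algebra_simps)
  also have "\<dots> = integral {-pi..pi} (\<lambda>x. g x * p x) - c * integral {-pi..pi} g"
  proof -
    have "(\<lambda>x. g x * p x) integrable_on {-pi..pi}"
      by (rule integrable_mult_continuous[OF continuous_on_trig_poly[OF p] g])
    moreover have "g integrable_on {-pi..pi}" using g by (simp add: absolutely_integrable_on_def)
    ultimately show ?thesis by (simp add: integral_diff integrable_on_mult_right)
  qed
  finally show ?thesis unfolding c_def by simp
qed

lemma du_Bois_Reymond_periodic:
  fixes g h :: "real \<Rightarrow> real"
  assumes g: "g absolutely_integrable_on {-pi..pi}"
    and test: "\<And>\<psi>. \<psi> \<in> trig_poly \<Longrightarrow> integral {-pi..pi} (\<lambda>x. g x * deriv \<psi> x) = 0"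
    and h: "continuous_on {-pi..pi} h" "h (-pi) = h pi"
  shows "integral {-pi..pi} (\<lambda>x. g x * h x) = integral {-pi..pi} g / (2*pi) * integral {-pi..pi} h"
proof -
  obtain p B where p: "\<And>k. p k \<in> trig_poly" and B: "\<And>k x. x \<in> {-pi..pi} \<Longrightarrow> \<bar>p k x\<bar> \<le> B"
    and lim: "\<And>x. x \<in> {-pi..pi} \<Longrightarrow> (\<lambda>k. p k x) \<longlonglongrightarrow> h x"
    using trig_poly_approximating_sequence[OF h] by blast
  note p_cont = continuous_on_trig_poly[OF p]
  have "(\<lambda>k. integral {-pi..pi} (\<lambda>x. 1 * p k x)) \<longlonglongrightarrow> integral {-pi..pi} (\<lambda>x. 1 * h x)"
    by (rule tendsto_integral_mult[OF _ p_cont B lim]) (simp add: absolutely_integrable_continuous_real)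
  then have "(\<lambda>k. integral {-pi..pi} g / (2*pi) * integral {-pi..pi} (p k))
      \<longlonglongrightarrow> integral {-pi..pi} g / (2*pi) * integral {-pi..pi} h"
    by (intro tendsto_mult tendsto_const) simp
  then have "(\<lambda>k. integral {-pi..pi} (\<lambda>x. g x * p k x))
      \<longlonglongrightarrow> integral {-pi..pi} g / (2*pi) * integral {-pi..pi} h"
    by (simp add: integral_mult_trig_poly_eq_mean[OF g test p])
  with tendsto_integral_mult[OF g p_cont B lim] show ?thesis by (rule LIMSEQ_unique)
qed

definition trapezoid :: "real \<Rightarrow> real \<Rightarrow> nat \<Rightarrow> real \<Rightarrow> real" where
  "trapezoid s r k x = max 0 (min 1 (real (Suc k) * min (x - s) (r - x)))"

lemma trapezoid_eq_0: "x \<notin> {s<..<r} \<Longrightarrow> trapezoid s r k x = 0"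
proof -
  assume "x \<notin> {s<..<r}"
  then have "min (x - s) (r - x) \<le> 0" by auto
  then have "real (Suc k) * min (x - s) (r - x) \<le> 0" by (simp add: mult_nonneg_nonpos)
  then show ?thesis unfolding trapezoid_def by simp
qed

lemma trapezoid_tendsto_1:
  assumes "x \<in> {s<..<r}"
  shows "(\<lambda>k. trapezoid s r k x) \<longlonglongrightarrow> 1"
proof -
  have m: "min (x - s) (r - x) > 0" using assms by simp
  obtain K where K: "1 / min (x - s) (r - x) < real K" using reals_Archimedean2 by blast
  have "trapezoid s r k x = 1" if "K \<le> k" for k
  proof -
    have "real K \<le> real k" using that by simp
    then have "1 / min (x - s) (r - x) < real (Suc k)" using K by simp
    then have "1 < real (Suc k) * min (x - s) (r - x)"
      using m by (simp add: divide_less_eq mult.commute)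
    then show ?thesis unfolding trapezoid_def by simp
  qed
  then have "\<forall>\<^sub>F k in sequentially. trapezoid s r k x = 1" by (auto simp: eventually_sequentially)
  then show ?thesis by (rule tendsto_eventually)
qed

lemma continuous_on_trapezoid: "continuous_on S (trapezoid s r k)"
  unfolding trapezoid_def by (intro continuous_intros)

lemma abs_trapezoid_le_1: "\<bar>trapezoid s r k x\<bar> \<le> 1"
  unfolding trapezoid_def by simp

lemma integral_Icc_eq_0_if_orthogonal:
  fixes f :: "real \<Rightarrow> real"
  assumes f: "f absolutely_integrable_on {-pi..pi}"
    and orth: "\<And>h. continuous_on {-pi..pi} h \<Longrightarrow> h (-pi) = h pi \<Longrightarrow>
                 integral {-pi..pi} (\<lambda>x. f x * h x) = 0"
    and sr: "-pi \<le> s" "r \<le> pi"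
  shows "integral {s..r} f = 0"
proof -
  have "(\<lambda>k. trapezoid s r k x) \<longlonglongrightarrow> (if x \<in> {s<..<r} then 1 else 0)" for x
    using trapezoid_tendsto_1[of x s r] trapezoid_eq_0[of x s r] by auto
  then have "(\<lambda>k. integral {-pi..pi} (\<lambda>x. f x * trapezoid s r k x))
      \<longlonglongrightarrow> integral {-pi..pi} (\<lambda>x. f x * (if x \<in> {s<..<r} then 1 else 0))"
    by (intro tendsto_integral_mult[OF f continuous_on_trapezoid abs_trapezoid_le_1])
  moreover have "integral {-pi..pi} (\<lambda>x. f x * trapezoid s r k x) = 0" for k
    using sr by (intro orth continuous_on_trapezoid) (simp add: trapezoid_eq_0)
  moreover have "integral {-pi..pi} (\<lambda>x. f x * (if x \<in> {s<..<r} then 1 else 0)) = integral {s..r} f"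
  proof -
    have "(\<lambda>x. f x * (if x \<in> {s<..<r} then 1 else 0)) = (\<lambda>x. if x \<in> {s<..<r} then f x else 0)"
      by auto
    moreover have "{s<..<r} \<inter> {-pi..pi} = {s<..<r}" using sr by auto
    ultimately show ?thesis by (simp only: integral_restrict_Int integral_open_interval_real)
  qed
  ultimately have "(\<lambda>k. 0) \<longlonglongrightarrow> integral {s..r} f" by simp
  then show ?thesis by (simp add: LIMSEQ_const_iff)
qed

lemma is_weak_deriv_has_integral:
  "is_weak_deriv f g \<Longrightarrow> a \<le> b \<Longrightarrow> (g has_integral (f b - f a)) {a..b}"
  unfolding is_weak_deriv_def by simp

lemma is_weak_deriv_integrable: "is_weak_deriv f g \<Longrightarrow> g integrable_on {a..b}"
  by (cases "a \<le> b") (auto intro: has_integral_integrable is_weak_deriv_has_integral)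

lemma is_weak_deriv_eq_integral: "is_weak_deriv f g \<Longrightarrow> a \<le> y \<Longrightarrow> f y = f a + integral {a..y} g"
  using is_weak_deriv_has_integral[THEN integral_unique, of f g a y] by simp

lemma is_weak_deriv_isCont:
  assumes "is_weak_deriv f g"
  shows "isCont f x"
proof -
  have "continuous_on {x-1..x+1} (\<lambda>y. f (x-1) + integral {x-1..y} g)"
    by (intro continuous_intros indefinite_integral_continuous_1 is_weak_deriv_integrable[OF assms])
  then have "continuous_on {x-1..x+1} f"
    by (rule continuous_on_eq) (use is_weak_deriv_eq_integral[OF assms] in auto)
  then show ?thesis by (rule continuous_on_interior) (auto simp: interior_atLeastAtMost_real)
qed

lemma is_weak_deriv_has_real_derivative:
  assumes "is_weak_deriv f g" and "\<And>y. isCont g y"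
  shows "(f has_real_derivative g x) (at x)"
proof -
  have "continuous_on {x-1..x+1} g" by (simp add: continuous_at_imp_continuous_on assms(2))
  then have "((\<lambda>y. integral {x-1..y} g) has_vector_derivative g x) (at x within {x-1..x+1})"
    by (rule integral_has_vector_derivative) simp
  then have "((\<lambda>y. integral {x-1..y} g) has_vector_derivative g x) (at x)"
    using at_within_interior[of x "{x-1..x+1}"] by (simp add: interior_atLeastAtMost_real)
  then have "((\<lambda>y. f (x-1) + integral {x-1..y} g) has_real_derivative g x) (at x)"
    by (auto intro!: derivative_eq_intros simp: has_real_derivative_iff_has_vector_derivative)
  then show ?thesis
  proof (rule has_field_derivative_transform_within_open[of _ _ _ "{x-1<..<x+1}"])
    show "f (x-1) + integral {x-1..y} g = f y" if "y \<in> {x-1<..<x+1}" for y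
      using is_weak_deriv_eq_integral[OF assms(1), of "x-1" y] that by simp
  qed auto
qed

lemma is_weak_deriv_le_integral:
  assumes wd: "is_weak_deriv f g" and R: "R integrable_on {a..b}" and Z: "negligible Z"
    and le: "\<And>x. x \<in> {a<..<b} \<Longrightarrow> x \<notin> Z \<Longrightarrow> g x \<le> R x" and ab: "a \<le> b"
  shows "f b - f a \<le> integral {a..b} R"
  using integral_le_AE[OF is_weak_deriv_integrable[OF wd] R Z le] is_weak_deriv_eq_integral[OF wd ab]
  by simp

definition primitive :: "(real \<Rightarrow> real) \<Rightarrow> real \<Rightarrow> real" where
  "primitive f x = (if 0 \<le> x then integral {0..x} f else - integral {x..0} f)"

lemma is_weak_deriv_primitive:
  assumes f: "\<And>a b. f integrable_on {a..b}"
  shows "is_weak_deriv (primitive f) f"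
  unfolding is_weak_deriv_def
proof (intro allI impI)
  fix a b :: real assume ab: "a \<le> b"
  have I: "(f has_integral integral {c..d} f) {c..d}" for c d using f by (rule integrable_integral)
  consider "0 \<le> a" | "a < 0" "0 \<le> b" | "b < 0" using ab by linarith
  then show "(f has_integral (primitive f b - primitive f a)) {a..b}"
  proof cases
    case 1
    then have "integral {0..b} f = integral {0..a} f + integral {a..b} f"
      using integral_unique[OF has_integral_combine[OF 1 ab I I]] by simp
    then show ?thesis using 1 ab I[of a b] by (simp add: primitive_def)
  next
    case 2
    then have "integral {a..b} f = integral {a..0} f + integral {0..b} f"
      using integral_unique[OF has_integral_combine[of a 0 b, OF _ _ I I]] by simp
    then show ?thesis using 2 I[of a b] by (simp add: primitive_def add.commute)
  next
    case 3
    then have "integral {a..0} f = integral {a..b} f + integral {b..0} f"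
      using integral_unique[OF has_integral_combine[of a b 0, OF ab _ I I]] by simp
    then show ?thesis using 3 ab I[of a b] by (simp add: primitive_def algebra_simps)
  qed
qed

lemma per2pi_if_is_weak_deriv:
  assumes wd: "is_weak_deriv F f" and f: "per2pi f" and F: "F pi = F (-pi)"
  shows "per2pi F"
proof -
  have shift: "F (b + 2*pi) - F (a + 2*pi) = F b - F a" if ab: "a \<le> b" for a b
  proof -
    have "f \<circ> (+) (2*pi) = f" using f unfolding per2pi_def by (auto simp: add.commute)
    then have "(f has_integral (F b - F a)) {a + 2*pi..b + 2*pi}"
      using has_integral_shift_Icc_real[of f "2*pi" "F b - F a" a b]
        is_weak_deriv_has_integral[OF wd ab] by simp
    moreover have "(f has_integral (F (b + 2*pi) - F (a + 2*pi))) {a + 2*pi..b + 2*pi}"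
      using is_weak_deriv_has_integral[OF wd] ab by simp
    ultimately show ?thesis using has_integral_unique by blast
  qed
  show ?thesis
    unfolding per2pi_def
  proof
    fix x
    show "F (x + 2 * pi) = F x"
      using shift[of "-pi" x] shift[of x "-pi"] F by (cases "-pi \<le> x") auto
  qed
qed

lemma W1p_S1_primitive:
  fixes f :: "real \<Rightarrow> real"
  assumes m: "f \<in> borel_measurable borel" and B: "\<And>x. \<bar>f x\<bar> \<le> B"
    and per: "per2pi f" and mean: "(f has_integral 0) {-pi..pi}"
  shows "W1p_S1 2 (primitive f) f"
proof -
  have wd: "is_weak_deriv (primitive f) f"
    by (intro is_weak_deriv_primitive integrable_if_bounded_measurable[OF m B])
  then have "primitive f pi = primitive f (-pi)"
    using has_integral_unique[OF mean is_weak_deriv_has_integral[OF wd, of "-pi" pi]] by simp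
  then have "per2pi (primitive f)" by (rule per2pi_if_is_weak_deriv[OF wd per])
  moreover have "Lp_S1 2 (primitive f)"
  proof -
    have c: "continuous_on UNIV (primitive f)"
      using is_weak_deriv_isCont[OF wd] continuous_at_imp_continuous_on by blast
    obtain C where "\<And>x. x \<in> {-pi..pi} \<Longrightarrow> \<bar>primitive f x\<bar> \<le> C"
      using continuous_on_bounded_Icc[OF continuous_on_subset[OF c]] by blast
    then show ?thesis by (rule Lp_S1_2_if_bounded_measurable[OF borel_measurable_continuous_onI[OF c]])
  qed
  moreover have "Lp_S1 2 f" using B by (intro Lp_S1_2_if_bounded_measurable[OF m])
  ultimately show ?thesis unfolding W1p_S1_def using wd per by blast
qed

lemma W2p_pos_S1_const: "c > 0 \<Longrightarrow> W2p_pos_S1 2 (\<lambda>x. c) (\<lambda>x. 0) (\<lambda>x. 0)"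
  unfolding W2p_pos_S1_def W1p_S1_def per2pi_def is_weak_deriv_def
  by (auto intro!: Lp_S1_2_if_bounded_measurable[where B="\<bar>c\<bar>"])

section \<open>The jump function\<close>

lemma lam_eq_minus_1: "-pi < x \<Longrightarrow> x < 0 \<Longrightarrow> lam x = -1"
  unfolding lam_def using sin_gt_zero[of "-x"] by auto

lemma lam_eq_1: "0 < x \<Longrightarrow> x < pi \<Longrightarrow> lam x = 1"
  unfolding lam_def using sin_gt_zero[of x] by auto

lemma lam_periodic: "lam (x + 2*pi) = lam x"
  unfolding lam_def by simp

lemma lam_measurable[measurable]: "lam \<in> borel_measurable borel"
  unfolding lam_def by measurable

lemma tau_measurable[measurable]: "tau t \<in> borel_measurable borel"
  unfolding tau_def by measurable

lemma abs_tau_le: "\<bar>tau t x\<bar> \<le> \<bar>t\<bar> + 1"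
  unfolding tau_def lam_def by auto

lemma integrable_tau: "tau t integrable_on {a..b}"
  by (rule integrable_if_bounded_measurable[OF tau_measurable abs_tau_le])

lemma absolutely_integrable_tau: "tau t absolutely_integrable_on {a..b}"
  by (rule absolutely_integrable_if_bounded_measurable[OF tau_measurable abs_tau_le])

lemma tau_constant_right:
  assumes "-pi \<le> x0" "x0 < pi"
  obtains \<tau>0 D where "D > 0" "x0 + D \<le> pi" "\<And>x. x0 < x \<Longrightarrow> x < x0 + D \<Longrightarrow> tau t x = \<tau>0"
proof (cases "x0 < 0")
  case True
  show ?thesis
    by (rule that[of "- x0" "t - 1"]) (use True assms in \<open>auto simp: tau_def lam_eq_minus_1\<close>)
next
  case False
  show ?thesis
    by (rule that[of "pi - x0" "t + 1"]) (use False assms in \<open>auto simp: tau_def lam_eq_1\<close>)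
qed

lemma has_integral_lam_mult:
  assumes "continuous_on {-pi..pi} k"
  shows "((\<lambda>x. lam x * k x) has_integral (integral {0..pi} k - integral {-pi..0} k)) {-pi..pi}"
proof -
  have k: "continuous_on {-pi..0} k" "continuous_on {0..pi} k"
    using assms by (auto elim: continuous_on_subset)
  have neg: "((\<lambda>x. lam x * k x) has_integral - integral {-pi..0} k) {-pi..0}"
    by (rule has_integral_spike_finite[of "{-pi, 0}", where f="\<lambda>x. - k x"])
       (auto simp: lam_eq_minus_1 intro: has_integral_neg integrable_integral integrable_continuous_real[OF k(1)])
  have pos: "((\<lambda>x. lam x * k x) has_integral integral {0..pi} k) {0..pi}"
    by (rule has_integral_spike_finite[of "{0, pi}", where f=k])
       (auto simp: lam_eq_1 intro: integrable_integral integrable_continuous_real[OF k(2)])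
  show ?thesis using has_integral_combine[OF _ _ neg pos] by simp
qed

text \<open>The distributional derivative of \<open>tau t\<close> on the circle is \<open>2 (\<delta>\<^sub>0 - \<delta>\<^sub>\<pi>)\<close>.\<close>

lemma has_integral_tau_mult_derivative:
  assumes d: "\<And>x. (\<psi> has_real_derivative \<psi>' x) (at x)" and c: "continuous_on {-pi..pi} \<psi>'"
    and per: "\<psi> pi = \<psi> (-pi)"
  shows "((\<lambda>x. tau t x * \<psi>' x) has_integral (2 * (\<psi> pi - \<psi> 0))) {-pi..pi}"
proof -
  have lam: "((\<lambda>x. lam x * \<psi>' x) has_integral ((\<psi> pi - \<psi> 0) - (\<psi> 0 - \<psi> (-pi)))) {-pi..pi}"
    using has_integral_lam_mult[OF c] integral_unique[OF has_integral_real_derivative[OF d, of 0 pi]]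
      integral_unique[OF has_integral_real_derivative[OF d, of "-pi" 0]]
    by simp
  have const: "((\<lambda>x. t * \<psi>' x) has_integral (t * (\<psi> pi - \<psi> (-pi)))) {-pi..pi}"
    by (intro has_integral_mult_right has_integral_real_derivative[OF d]) simp
  from const lam have "((\<lambda>x. t * \<psi>' x + lam x * \<psi>' x) has_integral
      (t * (\<psi> pi - \<psi> (-pi)) + ((\<psi> pi - \<psi> 0) - (\<psi> 0 - \<psi> (-pi))))) {-pi..pi}"
    by (rule has_integral_add)
  then show ?thesis using per unfolding tau_def by (simp add: algebra_simps)
qed

lemma has_integral_mult_tau_gammaN:
  assumes c: "continuous_on {-pi..pi} N" and pos: "\<And>x. N x > 0"
  shows "((\<lambda>x. N x * tau (gammaN N) x) has_integral 0) {-pi..pi}"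
proof -
  define L where "L = integral {0..pi} N - integral {-pi..0} N"
  have l: "((\<lambda>x. lam x * N x) has_integral L) {-pi..pi}"
    unfolding L_def by (rule has_integral_lam_mult[OF c])
  have IN: "integral {-pi..pi} N > 0" by (rule integral_pos_if_pos[OF c pos]) simp
  have "gammaN N * integral {-pi..pi} N = - L"
    using IN integral_unique[OF l] unfolding gammaN_def by simp
  then have "((\<lambda>x. gammaN N * N x + lam x * N x) has_integral 0) {-pi..pi}"
    using has_integral_add[OF has_integral_mult_right[OF integrable_integral[OF
          integrable_continuous_real[OF c]], of "gammaN N"] l] by simp
  then show ?thesis unfolding tau_def by (simp add: algebra_simps)
qed

lemma qexp_gt_2: "n \<ge> 3 \<Longrightarrow> qexp n > 2"
  unfolding qexp_def by (simp add: field_simps)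

lemma kap_pos: "n \<ge> 3 \<Longrightarrow> kap n > 0"
  unfolding kap_def by simp

section \<open>Existence\<close>

lemma is_solution_const:
  fixes N :: "real \<Rightarrow> real" and n :: nat
  assumes sm: "smooth_fun N" and per: "per2pi N" and pos: "\<And>x. N x > 0" and s: "s > 0"
  defines "t \<equiv> gammaN N"
  defines "w' \<equiv> \<lambda>x. 2 * N x * (s powr qexp n * tau t x)"
  shows "is_solution n N t 0 0 (\<lambda>x. s) (primitive w')"
proof -
  define q where "q = qexp n"
  have Nc: "continuous_on S N" for S using smooth_fun_isCont[OF sm] continuous_at_imp_continuous_on by blast
  obtain B where B: "\<And>x. \<bar>N x\<bar> \<le> B" using per2pi_bounded[OF per Nc] by blast
  have W1: "W1p_S1 2 (primitive w') w'"
  proof (rule W1p_S1_primitive)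
    show "w' \<in> borel_measurable borel"
      unfolding w'_def using borel_measurable_continuous_onI[OF Nc] by measurable
    show "\<bar>w' x\<bar> \<le> 2 * B * (s powr q * (\<bar>t\<bar> + 1))" for x
      unfolding w'_def q_def abs_mult using B[of x] abs_tau_le[of t x]
      by (intro mult_mono mult_left_mono) auto
    show "per2pi w'" using per unfolding per2pi_def w'_def tau_def by (simp add: lam_periodic)
    show "(w' has_integral 0) {-pi..pi}"
      using has_integral_mult_right[OF has_integral_mult_tau_gammaN[OF Nc pos], of "2 * s powr q"]
      unfolding w'_def t_def q_def by (simp add: algebra_simps)
  qed
  have v: "w' x / (2 * N x) = s powr q * tau t x" for x
    using pos[of x] unfolding w'_def q_def by simp
  have ode: "- 2 * kap n * q * 0 - 2 * 0\<^sup>2 * s powr (- q - 1)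
      - kap n * (0 + w' x / (2 * N x))\<^sup>2 * s powr (- q - 1) + kap n * (tau t x)\<^sup>2 * s powr (q - 1) = 0" for x
  proof -
    have "s powr q * s powr q * s powr (- q - 1) = s powr (q - 1)"
      using s by (simp add: powr_add[symmetric])
    then show ?thesis unfolding v by (simp add: power2_eq_square algebra_simps)
  qed
  have weak: "- integral {-pi..pi} (\<lambda>x. w' x / (2 * N x) * deriv \<psi> x)
      = 2 * (s powr q * \<psi> 0 - s powr q * \<psi> pi)" if "smooth_fun \<psi>" "per2pi \<psi>" for \<psi>
  proof -
    have "((\<lambda>x. tau t x * deriv \<psi> x) has_integral (2 * (\<psi> pi - \<psi> 0))) {-pi..pi}"
    proof (rule has_integral_tau_mult_derivative)
      show "continuous_on {-pi..pi} (deriv \<psi>)"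
        using smooth_fun_isCont_deriv[OF that(1)] by (simp add: continuous_at_imp_continuous_on)
      show "\<psi> pi = \<psi> (-pi)" using per2pi_minus_pi[OF that(2)] by simp
    qed (rule smooth_fun_has_real_derivative[OF that(1)])
    from integral_unique[OF has_integral_mult_right[OF this, of "s powr q"]] show ?thesis
      unfolding v by (simp add: algebra_simps)
  qed
  show ?thesis unfolding is_solution_def q_def[symmetric]
    using W2p_pos_S1_const[OF s] W1 ode weak by (intro exI[of _ 2] exI conjI AE_I2 allI impI) auto
qed

section \<open>Nonexistence\<close>

lemma weak_tau_jumps_eq:
  assumes weak: "\<And>\<psi>. \<psi> \<in> trig_poly \<Longrightarrow>
      - integral {-pi..pi} (\<lambda>x. v x * deriv \<psi> x) = 2 * (A * \<psi> 0 - B * \<psi> pi)"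
  shows "A = B"
proof -
  have "deriv (\<lambda>x::real. 1::real) = (\<lambda>x. 0)" by (intro ext DERIV_imp_deriv) simp
  then show ?thesis using weak[OF trig_poly_const[of 1]] by simp
qed

lemma integral_mult_deriv_sub_tau_eq_0:
  assumes v: "v absolutely_integrable_on {-pi..pi}"
    and weak: "\<And>\<psi>. \<psi> \<in> trig_poly \<Longrightarrow>
      - integral {-pi..pi} (\<lambda>x. v x * deriv \<psi> x) = 2 * (A * \<psi> 0 - A * \<psi> pi)"
    and \<psi>: "\<psi> \<in> trig_poly"
  shows "integral {-pi..pi} (\<lambda>x. (v x - A * tau t x) * deriv \<psi> x) = 0"
proof -
  have d: "deriv \<psi> \<in> trig_poly" "\<And>x. (\<psi> has_real_derivative deriv \<psi> x) (at x)"
    using trig_poly_deriv[OF \<psi>] by auto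
  have tau: "((\<lambda>x. A * (tau t x * deriv \<psi> x)) has_integral A * (2 * (\<psi> pi - \<psi> 0))) {-pi..pi}"
    by (intro has_integral_mult_right has_integral_tau_mult_derivative[OF d(2)]
        continuous_on_trig_poly[OF d(1)]) (simp add: per2pi_minus_pi[OF per2pi_trig_poly[OF \<psi>]])
  have "(\<lambda>x. v x * deriv \<psi> x) integrable_on {-pi..pi}"
    by (rule integrable_mult_continuous[OF continuous_on_trig_poly[OF d(1)] v])
  then have "integral {-pi..pi} (\<lambda>x. v x * deriv \<psi> x - A * (tau t x * deriv \<psi> x))
      = integral {-pi..pi} (\<lambda>x. v x * deriv \<psi> x) - A * (2 * (\<psi> pi - \<psi> 0))"
    using integral_diff[OF _ has_integral_integrable[OF tau]] integral_unique[OF tau] by simp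
  then show ?thesis using weak[OF \<psi>] by (simp add: algebra_simps)
qed

lemma integral_eq_tau_if_weak:
  fixes v N :: "real \<Rightarrow> real"
  assumes v: "v absolutely_integrable_on {-pi..pi}"
    and weak: "\<And>\<psi>. \<psi> \<in> trig_poly \<Longrightarrow>
      - integral {-pi..pi} (\<lambda>x. v x * deriv \<psi> x) = 2 * (A * \<psi> 0 - B * \<psi> pi)"
    and N: "continuous_on {-pi..pi} N" "\<And>x. N x > 0" "N (-pi) = N pi"
    and Nv: "((\<lambda>x. N x * v x) has_integral 0) {-pi..pi}"
    and sr: "-pi \<le> s" "r \<le> pi"
  shows "integral {s..r} v = A * integral {s..r} (tau (gammaN N))"
proof -
  define g where "g x = v x - A * tau (gammaN N) x" for x
  have test: "integral {-pi..pi} (\<lambda>x. g x * deriv \<psi> x) = 0" if "\<psi> \<in> trig_poly" for \<psi>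
    unfolding g_def using weak_tau_jumps_eq[OF weak] weak
    by (intro integral_mult_deriv_sub_tau_eq_0[OF v _ that]) auto
  have g: "g absolutely_integrable_on {-pi..pi}"
    unfolding g_def by (intro set_integral_diff(1) v set_integrable_mult_right absolutely_integrable_tau)
  have "integral {-pi..pi} (\<lambda>x. g x * N x) = 0"
  proof -
    have "((\<lambda>x. N x * v x - A * (N x * tau (gammaN N) x)) has_integral 0 - A * 0) {-pi..pi}"
      by (intro has_integral_diff Nv has_integral_mult_right has_integral_mult_tau_gammaN N)
    then show ?thesis unfolding g_def by (simp add: algebra_simps integral_unique)
  qed
  moreover have "integral {-pi..pi} N > 0" by (rule integral_pos_if_pos[OF N(1,2)]) simp
  ultimately have "integral {-pi..pi} g = 0"
    using du_Bois_Reymond_periodic[OF g test N(1,3)] by simp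
  then have "integral {-pi..pi} (\<lambda>x. g x * h x) = 0"
    if "continuous_on {-pi..pi} h" "h (-pi) = h pi" for h
    using du_Bois_Reymond_periodic[OF g test that] by simp
  then have "integral {s..r} g = 0" by (rule integral_Icc_eq_0_if_orthogonal[OF g _ sr])
  moreover have "integral {s..r} g = integral {s..r} v - A * integral {s..r} (tau (gammaN N))"
  proof -
    have "{s..r} \<subseteq> {-pi..pi}" using sr by auto
    then have "v integrable_on {s..r}"
      using v integrable_on_subinterval absolutely_integrable_on_def by blast
    then show ?thesis unfolding g_def by (simp add: integral_diff integrable_tau integrable_on_mult_right)
  qed
  ultimately show ?thesis by simp
qed

lemma linear_le_square_div:
  fixes P V \<alpha> :: real
  assumes "P > 0"
  shows "2 * \<alpha> * V - \<alpha>\<^sup>2 * P \<le> V\<^sup>2 / P"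
proof -
  have "0 \<le> (V - \<alpha> * P)\<^sup>2" by simp
  then have "2 * \<alpha> * V * P - \<alpha>\<^sup>2 * P * P \<le> V\<^sup>2" by (simp add: power2_eq_square algebra_simps)
  then show ?thesis using assms by (simp add: field_simps power2_eq_square)
qed

text \<open>Bounding the unknown \<open>V\<^sup>2\<close> from below by a tangent line makes the bound linear in
  \<open>V\<close>, so that only integrals of \<open>V\<close> are needed.\<close>

lemma ode_upper_bound:
  fixes \<kappa> q \<eta> \<tau> V u b y \<alpha> :: real
  assumes q: "q \<ge> 1" and k: "\<kappa> > 0" and u: "0 < u" "u \<le> b"
    and eq: "- 2 * \<kappa> * q * y - 2 * \<eta>\<^sup>2 * u powr (- q - 1) - \<kappa> * V\<^sup>2 * u powr (- q - 1)
             + \<kappa> * \<tau>\<^sup>2 * u powr (q - 1) = 0"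
  shows "2 * \<kappa> * q * y \<le> - 2 * \<eta>\<^sup>2 / b powr (q + 1) + \<kappa> * \<alpha>\<^sup>2 * b powr (q + 1)
           + \<kappa> * \<tau>\<^sup>2 * b powr (q - 1) - 2 * \<kappa> * \<alpha> * V"
proof -
  define Pu where "Pu = u powr (q + 1)"
  define Pb where "Pb = b powr (q + 1)"
  have P: "0 < Pu" "Pu \<le> Pb" unfolding Pu_def Pb_def using u q by (auto intro!: powr_mono2)
  have inv: "u powr (- q - 1) = 1 / Pu"
    unfolding Pu_def using powr_minus[of u "q + 1"] by (simp add: divide_inverse)
  have "- 2 * \<eta>\<^sup>2 / Pu \<le> - 2 * \<eta>\<^sup>2 / Pb"
    using P by (simp add: frac_le)
  moreover have "\<kappa> * (2 * \<alpha> * V - \<alpha>\<^sup>2 * Pb) \<le> \<kappa> * (V\<^sup>2 / Pu)"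
  proof -
    have "2 * \<alpha> * V - \<alpha>\<^sup>2 * Pb \<le> 2 * \<alpha> * V - \<alpha>\<^sup>2 * Pu" using P by (simp add: mult_left_mono)
    also have "\<dots> \<le> V\<^sup>2 / Pu" by (rule linear_le_square_div[OF P(1)])
    finally show ?thesis by (rule mult_left_mono) (use k in simp)
  qed
  moreover have "\<kappa> * \<tau>\<^sup>2 * u powr (q - 1) \<le> \<kappa> * \<tau>\<^sup>2 * b powr (q - 1)"
    using u q k by (intro mult_left_mono powr_mono2) auto
  ultimately show ?thesis
    using eq unfolding inv Pb_def[symmetric] by (simp add: algebra_simps)
qed

lemma ode_bound_constant:
  fixes \<kappa> q \<eta> \<tau> A b :: real
  assumes b: "b > 0" and small: "\<kappa> * \<tau>\<^sup>2 * (b powr (2 * q) - A\<^sup>2) \<le> \<eta>\<^sup>2"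
  defines "P \<equiv> b powr (q + 1)"
  shows "- 2 * \<eta>\<^sup>2 / P + \<kappa> * (A * \<tau> / P)\<^sup>2 * P + \<kappa> * \<tau>\<^sup>2 * b powr (q - 1)
           - 2 * \<kappa> * (A * \<tau> / P) * (A * \<tau>) \<le> - \<eta>\<^sup>2 / P"
proof -
  have P: "P > 0" unfolding P_def using b by simp
  have "b powr (q - 1) * P = b powr (2 * q)" unfolding P_def using b by (simp add: powr_add[symmetric])
  then have "- 2 * \<eta>\<^sup>2 / P + \<kappa> * (A * \<tau> / P)\<^sup>2 * P + \<kappa> * \<tau>\<^sup>2 * b powr (q - 1)
        - 2 * \<kappa> * (A * \<tau> / P) * (A * \<tau>)
      = (- 2 * \<eta>\<^sup>2 + \<kappa> * \<tau>\<^sup>2 * (b powr (2 * q) - A\<^sup>2)) / P"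
    using P by (simp add: field_simps power2_eq_square)
  also have "\<dots> \<le> - \<eta>\<^sup>2 / P" by (rule divide_right_mono) (use small P in auto)
  finally show ?thesis .
qed

lemma strict_decrease_near_critical_point:
  fixes \<phi> \<phi>' \<phi>'' v :: "real \<Rightarrow> real" and q \<kappa> \<eta> \<tau> A b x0 x1 :: real
  assumes q: "q \<ge> 1" and k: "\<kappa> > 0" and \<eta>: "\<eta> \<noteq> 0"
    and \<phi>': "\<And>x. (\<phi> has_real_derivative \<phi>' x) (at x)" and \<phi>'': "is_weak_deriv \<phi>' \<phi>''"
    and crit: "\<phi>' x0 = 0" and x01: "x0 < x1"
    and \<phi>b: "\<And>x. x \<in> {x0..x1} \<Longrightarrow> 0 < \<phi> x \<and> \<phi> x \<le> b"
    and v: "v integrable_on {x0..x1}"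
    and vint: "\<And>s. s \<in> {x0..x1} \<Longrightarrow> integral {x0..s} v = A * \<tau> * (s - x0)"
    and small: "\<kappa> * \<tau>\<^sup>2 * (b powr (2 * q) - A\<^sup>2) \<le> \<eta>\<^sup>2"
    and Z: "negligible Z"
    and ode: "\<And>x. x \<in> {x0<..<x1} \<Longrightarrow> x \<notin> Z \<Longrightarrow>
      - 2 * \<kappa> * q * \<phi>'' x - 2 * \<eta>\<^sup>2 * \<phi> x powr (- q - 1)
      - \<kappa> * (v x)\<^sup>2 * \<phi> x powr (- q - 1) + \<kappa> * \<tau>\<^sup>2 * \<phi> x powr (q - 1) = 0"
  shows "\<phi> x1 < \<phi> x0"
proof -
  define P where "P = b powr (q + 1)"
  define \<alpha> where "\<alpha> = A * \<tau> / P"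
  define C where "C = - 2 * \<eta>\<^sup>2 / P + \<kappa> * \<alpha>\<^sup>2 * P + \<kappa> * \<tau>\<^sup>2 * b powr (q - 1)"
  define R where "R x = (C - 2 * \<kappa> * \<alpha> * v x) / (2 * \<kappa> * q)" for x
  define c where "c = \<eta>\<^sup>2 / (2 * \<kappa> * q * P)"
  have b: "b > 0" using \<phi>b[of x0] x01 by auto
  have c: "c > 0" unfolding c_def P_def using \<eta> k q b by simp
  have CA: "C - 2 * \<kappa> * \<alpha> * (A * \<tau>) \<le> - \<eta>\<^sup>2 / P"
    unfolding C_def \<alpha>_def P_def by (rule ode_bound_constant[OF b small])
  have R_le: "\<phi>'' x \<le> R x" if "x \<in> {x0<..<x1}" "x \<notin> Z" for x
  proof -
    have "2 * \<kappa> * q * \<phi>'' x \<le> C - 2 * \<kappa> * \<alpha> * v x"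
      unfolding C_def P_def using \<phi>b[of x] that
      by (intro ode_upper_bound[OF q k _ _ ode[OF that]]) auto
    then show ?thesis unfolding R_def using k q by (simp add: field_simps)
  qed
  have "\<phi>' s \<le> - c * (s - x0)" if s: "s \<in> {x0..x1}" for s
  proof -
    have vs: "v integrable_on {x0..s}" using integrable_on_subinterval[OF v] s by auto
    have "integral {x0..s} (\<lambda>x. C - 2 * \<kappa> * \<alpha> * v x) = C * (s - x0) - 2 * \<kappa> * \<alpha> * (A * \<tau> * (s - x0))"
      using integral_diff[OF integrable_const_ivl integrable_on_mult_right[OF vs], of C "2 * \<kappa> * \<alpha>"] s
      by (simp add: vint[OF s, symmetric])
    then have "integral {x0..s} R = (s - x0) * (C - 2 * \<kappa> * \<alpha> * (A * \<tau>)) / (2 * \<kappa> * q)"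
      unfolding R_def integral_divide by (simp add: algebra_simps)
    also have "\<dots> \<le> (s - x0) * (- \<eta>\<^sup>2 / P) / (2 * \<kappa> * q)"
      using CA s k q by (intro divide_right_mono mult_left_mono) auto
    also have "\<dots> = - c * (s - x0)" unfolding c_def by (simp add: field_simps)
    finally have "integral {x0..s} R \<le> - c * (s - x0)" .
    moreover have "\<phi>' s - \<phi>' x0 \<le> integral {x0..s} R"
      by (rule is_weak_deriv_le_integral[OF \<phi>'' _ Z R_le])
         (use s vs in \<open>auto simp: R_def intro!: integrable_on_divide integrable_diff integrable_on_mult_right\<close>)
    ultimately show ?thesis using crit by simp
  qed
  then show ?thesis by (rule decreasing_if_derivative_le_linear[OF \<phi>' x01 c])
qed

lemma exists_bound_above_min:
  fixes \<kappa> \<tau> \<eta> m A q :: real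
  assumes m: "m > 0" and k: "\<kappa> > 0" and \<eta>: "\<eta> \<noteq> 0" and mA: "m powr q \<le> A"
  obtains b where "m < b" "\<kappa> * \<tau>\<^sup>2 * (b powr (2 * q) - A\<^sup>2) \<le> \<eta>\<^sup>2"
proof -
  have \<tau>: "\<tau>\<^sup>2 + 1 > 0" by (simp add: add_nonneg_pos)
  then have "\<eta>\<^sup>2 / (\<kappa> * (\<tau>\<^sup>2 + 1)) > 0" using \<eta> k by simp
  then obtain b where b: "m < b" "b powr (2 * q) - m powr (2 * q) < \<eta>\<^sup>2 / (\<kappa> * (\<tau>\<^sup>2 + 1))"
    by (rule exists_gt_powr_close[OF m])
  have "m powr (2 * q) = (m powr q)\<^sup>2" by (simp add: power2_eq_square powr_add[symmetric])
  also have "\<dots> \<le> A\<^sup>2" using mA m by (simp add: power_mono)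
  finally have "\<kappa> * \<tau>\<^sup>2 * (b powr (2 * q) - A\<^sup>2) \<le> \<kappa> * \<tau>\<^sup>2 * (\<eta>\<^sup>2 / (\<kappa> * (\<tau>\<^sup>2 + 1)))"
    using b(2) k by (intro mult_left_mono) auto
  also have "\<dots> = \<eta>\<^sup>2 * \<tau>\<^sup>2 / (\<tau>\<^sup>2 + 1)" using k by simp
  also have "\<dots> \<le> \<eta>\<^sup>2" using \<tau> by (simp add: divide_le_eq algebra_simps)
  finally show ?thesis using b(1) that by blast
qed

lemma no_positive_periodic_solution:
  fixes \<phi> \<phi>' \<phi>'' v :: "real \<Rightarrow> real" and q \<kappa> \<eta> t :: real
  assumes q: "q \<ge> 1" and k: "\<kappa> > 0" and \<eta>: "\<eta> \<noteq> 0"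
    and pos: "\<And>x. \<phi> x > 0" and per: "per2pi \<phi>"
    and \<phi>': "\<And>x. (\<phi> has_real_derivative \<phi>' x) (at x)" and \<phi>'': "is_weak_deriv \<phi>' \<phi>''"
    and v: "v integrable_on {-pi..pi}"
    and vint: "\<And>s r. -pi \<le> s \<Longrightarrow> r \<le> pi \<Longrightarrow> integral {s..r} v = \<phi> 0 powr q * integral {s..r} (tau t)"
    and Z: "negligible Z"
    and ode: "\<And>x. x \<notin> Z \<Longrightarrow>
      - 2 * \<kappa> * q * \<phi>'' x - 2 * \<eta>\<^sup>2 * \<phi> x powr (- q - 1)
      - \<kappa> * (v x)\<^sup>2 * \<phi> x powr (- q - 1) + \<kappa> * (tau t x)\<^sup>2 * \<phi> x powr (q - 1) = 0"
  shows False
proof -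
  have cont: "isCont \<phi> x" for x using \<phi>' by (rule DERIV_isCont)
  obtain x0 where x0: "-pi \<le> x0" "x0 < pi" and min: "\<And>y. \<phi> x0 \<le> \<phi> y"
    using per2pi_attains_min[OF per] cont by (metis continuous_at_imp_continuous_on)
  have crit: "\<phi>' x0 = 0" by (rule DERIV_local_min[OF \<phi>' zero_less_one]) (use min in blast)
  obtain \<tau>0 D where D: "D > 0" "x0 + D \<le> pi" and \<tau>0: "\<And>x. x0 < x \<Longrightarrow> x < x0 + D \<Longrightarrow> tau t x = \<tau>0"
    using tau_constant_right[OF x0] by blast
  have "\<phi> x0 powr q \<le> \<phi> 0 powr q" using min[of 0] pos[of x0] q by (intro powr_mono2) auto
  then obtain b where b: "\<phi> x0 < b" and small: "\<kappa> * \<tau>0\<^sup>2 * (b powr (2 * q) - (\<phi> 0 powr q)\<^sup>2) \<le> \<eta>\<^sup>2"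
    by (rule exists_bound_above_min[OF pos k \<eta>])
  obtain x1 where x1: "x0 < x1" "x1 \<le> x0 + D" and \<phi>b: "\<And>x. x \<in> {x0..x1} \<Longrightarrow> \<phi> x \<le> b"
    using isCont_le_right[OF cont b, of "x0 + D"] D(1) by auto
  have "\<phi> x1 < \<phi> x0"
  proof (rule strict_decrease_near_critical_point[OF q k \<eta> \<phi>' \<phi>'' crit x1(1) _ _ _ small Z])
    show "0 < \<phi> x \<and> \<phi> x \<le> b" if "x \<in> {x0..x1}" for x using pos \<phi>b[OF that] by blast
    show "v integrable_on {x0..x1}" using integrable_on_subinterval[OF v] x0 x1 D by auto
    show "integral {x0..s} v = \<phi> 0 powr q * \<tau>0 * (s - x0)" if "s \<in> {x0..x1}" for s
    proof -
      have "integral {x0..s} (tau t) = integral {x0..s} (\<lambda>x. \<tau>0)"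
        by (rule integral_spike[of "{x0, s}"]) (use \<tau>0 that x1 in auto)
      then show ?thesis using vint[of x0 s] that x0 x1 D by simp
    qed
    show "- 2 * \<kappa> * q * \<phi>'' x - 2 * \<eta>\<^sup>2 * \<phi> x powr (- q - 1) - \<kappa> * (v x)\<^sup>2 * \<phi> x powr (- q - 1)
        + \<kappa> * \<tau>0\<^sup>2 * \<phi> x powr (q - 1) = 0" if "x \<in> {x0<..<x1}" "x \<notin> Z" for x
      using ode[OF that(2)] \<tau>0[of x] that x1 by simp
  qed
  then show False using min[of x1] by simp
qed

lemma flux_absolutely_integrable_mean_zero:
  fixes N w w' :: "real \<Rightarrow> real"
  assumes w: "W1p_S1 p w w'" "p \<ge> 1" and N: "continuous_on {-pi..pi} N" "\<And>x. N x > 0"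
  shows "(\<lambda>x. w' x / (2 * N x)) absolutely_integrable_on {-pi..pi}"
    and "((\<lambda>x. N x * (w' x / (2 * N x))) has_integral 0) {-pi..pi}"
proof -
  have w': "w' absolutely_integrable_on {-pi..pi}" "is_weak_deriv w w'" "per2pi w"
    using w Lp_S1_absolutely_integrable unfolding W1p_S1_def by auto
  have "N x \<noteq> 0" for x using N(2)[of x] by simp
  then have "continuous_on {-pi..pi} (\<lambda>x. 1 / (2 * N x))" by (intro continuous_intros N(1)) simp
  from absolutely_integrable_continuous_mult[OF this w'(1)]
  show "(\<lambda>x. w' x / (2 * N x)) absolutely_integrable_on {-pi..pi}" by simp
  have "(w' has_integral 0) {-pi..pi}"
    using is_weak_deriv_has_integral[OF w'(2), of "-pi" pi] per2pi_minus_pi[OF w'(3)] by simp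
  then have "((\<lambda>x. w' x / 2) has_integral 0) {-pi..pi}"
    using has_integral_divide[of w' 0 "{-pi..pi}" 2] by simp
  moreover have "(\<lambda>x. N x * (w' x / (2 * N x))) = (\<lambda>x. w' x / 2)"
    using N(2) by (simp add: fun_eq_iff less_imp_neq[symmetric])
  ultimately show "((\<lambda>x. N x * (w' x / (2 * N x))) has_integral 0) {-pi..pi}" by simp
qed

lemma not_is_solution_if_eta_nonzero:
  fixes N :: "real \<Rightarrow> real"
  assumes n: "n \<ge> 3" and sm: "smooth_fun N" and per: "per2pi N" and pos: "\<And>x. N x > 0"
    and \<eta>: "\<eta> \<noteq> 0"
  shows "\<not> is_solution n N (gammaN N) \<eta> 0 \<phi> w"
proof
  assume "is_solution n N (gammaN N) \<eta> 0 \<phi> w"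
  then obtain p \<phi>' \<phi>'' w' where p: "p > 1" and W2: "W2p_pos_S1 p \<phi> \<phi>' \<phi>''" and W1: "W1p_S1 p w w'"
    and ode: "AE x in lborel. - 2 * kap n * qexp n * \<phi>'' x - 2 * \<eta>\<^sup>2 * \<phi> x powr (- qexp n - 1)
          - kap n * (0 + w' x / (2 * N x))\<^sup>2 * \<phi> x powr (- qexp n - 1)
          + kap n * (tau (gammaN N) x)\<^sup>2 * \<phi> x powr (qexp n - 1) = 0"
    and weak: "\<And>\<psi>. smooth_fun \<psi> \<Longrightarrow> per2pi \<psi> \<Longrightarrow>
          - integral {-pi..pi} (\<lambda>x. w' x / (2 * N x) * deriv \<psi> x)
            = 2 * (\<phi> 0 powr qexp n * \<psi> 0 - \<phi> pi powr qexp n * \<psi> pi)"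
    unfolding is_solution_def by blast
  define v where "v x = w' x / (2 * N x)" for x
  have Nc: "continuous_on S N" for S using smooth_fun_isCont[OF sm] continuous_at_imp_continuous_on by blast
  note v = flux_absolutely_integrable_mean_zero[OF W1 less_imp_le[OF p] Nc pos, folded v_def]
  have vint: "integral {s..r} v = \<phi> 0 powr qexp n * integral {s..r} (tau (gammaN N))"
    if "-pi \<le> s" "r \<le> pi" for s r
  proof (rule integral_eq_tau_if_weak[OF v(1) _ Nc pos _ v(2) that])
    show "- integral {-pi..pi} (\<lambda>x. v x * deriv \<psi> x) = 2 * (\<phi> 0 powr qexp n * \<psi> 0 - \<phi> pi powr qexp n * \<psi> pi)"
      if "\<psi> \<in> trig_poly" for \<psi>
      unfolding v_def using weak[OF smooth_fun_trig_poly[OF that] per2pi_trig_poly[OF that]] .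
    show "N (-pi) = N pi" by (rule per2pi_minus_pi[OF per])
  qed
  have \<phi>: "\<And>x. \<phi> x > 0" "per2pi \<phi>" "is_weak_deriv \<phi> \<phi>'" "is_weak_deriv \<phi>' \<phi>''"
    using W2 unfolding W2p_pos_S1_def W1p_S1_def by auto
  have \<phi>': "(\<phi> has_real_derivative \<phi>' x) (at x)" for x
    using is_weak_deriv_has_real_derivative[OF \<phi>(3) is_weak_deriv_isCont[OF \<phi>(4)]] .
  obtain Z where Z: "negligible Z" and ode_Z: "\<And>x. x \<notin> Z \<Longrightarrow>
      - 2 * kap n * qexp n * \<phi>'' x - 2 * \<eta>\<^sup>2 * \<phi> x powr (- qexp n - 1)
      - kap n * (v x)\<^sup>2 * \<phi> x powr (- qexp n - 1)
      + kap n * (tau (gammaN N) x)\<^sup>2 * \<phi> x powr (qexp n - 1) = 0"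
    using AE_completion[OF ode] unfolding eventually_ae_filter_negligible v_def by auto
  have "v integrable_on {-pi..pi}" using v(1) by (simp add: absolutely_integrable_on_def)
  from no_positive_periodic_solution[OF _ _ \<eta> \<phi>(1,2) \<phi>' \<phi>(4) this vint Z ode_Z]
  show False using qexp_gt_2[OF n] kap_pos[OF n] by simp
qed

theorem theorem3p2:
  fixes n :: nat and N :: "real \<Rightarrow> real" and \<eta> \<mu> t :: real
  assumes "n \<ge> 3"
    and "smooth_fun N" and "per2pi N" and "\<forall>x. N x > 0"
    and "t = gammaN N"
  shows "(\<mu> = 0 \<and> \<eta> = 0 \<longrightarrow>
           (\<exists>(a::real) b F. a < b \<and>
              (\<forall>s\<in>{a<..<b}. is_solution n N t \<eta> \<mu> (fst (F s)) (snd (F s))) \<and>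
              (\<forall>s1\<in>{a<..<b}. \<forall>s2\<in>{a<..<b}. s1 \<noteq> s2 \<longrightarrow> \<not> same_solution (F s1) (F s2))))
       \<and> (\<mu> = 0 \<and> \<eta> \<noteq> 0 \<longrightarrow> \<not> (\<exists>\<phi> w. is_solution n N t \<eta> \<mu> \<phi> w))"
proof (intro conjI impI)
  assume "\<mu> = 0 \<and> \<eta> = 0"
  define F where "F s = ((\<lambda>x::real. s), primitive (\<lambda>x. 2 * N x * (s powr qexp n * tau t x)))" for s :: real
  have "is_solution n N t \<eta> \<mu> (fst (F s)) (snd (F s))" if "s \<in> {0<..<1}" for s
    using is_solution_const[OF assms(2,3)] assms(4,5) \<open>\<mu> = 0 \<and> \<eta> = 0\<close> that unfolding F_def by auto
  moreover have "\<not> same_solution (F s1) (F s2)" if "s1 \<noteq> s2" for s1 s2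
    using that unfolding F_def same_solution_def by (auto simp: fun_eq_iff)
  ultimately show "\<exists>(a::real) b F. a < b \<and>
      (\<forall>s\<in>{a<..<b}. is_solution n N t \<eta> \<mu> (fst (F s)) (snd (F s))) \<and>
      (\<forall>s1\<in>{a<..<b}. \<forall>s2\<in>{a<..<b}. s1 \<noteq> s2 \<longrightarrow> \<not> same_solution (F s1) (F s2))"
    by (intro exI[of _ "0::real"] exI[of _ "1::real"] exI[of _ F]) auto
next
  assume "\<mu> = 0 \<and> \<eta> \<noteq> 0"
  then show "\<not> (\<exists>\<phi> w. is_solution n N t \<eta> \<mu> \<phi> w)"
    using not_is_solution_if_eta_nonzero[OF assms(1-3)] assms(4,5) by auto
qed

end
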